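(* Let $\mathcal H$ be a connected $As^c$-$Mag$-bialgebra and $e=\mathrm{id}+\sum_{n\ge1}(-1)^n\omega^{n+1}\circ\delta^n:\bar{\mathcal H}\to\bar{\mathcal H}$. Then for every $x\in\bar{\mathcal H}$, $$x=e(x)+\omega_r^2\big((e\otimes e)(\delta^1(x))\big)+\dots+\omega_r^{n+1}\big(e^{\otimes(n+1)}(\delta^n(x))\big)+\cdots,$$ the sum being finite.
   Context: An $As^c$-$Mag$-bialgebra is a vector space $\mathcal H$ over a field with a bilinear product $\cdot$ (not assumed associative) with two-sided unit $1$ and a coassociative counital coproduct $\Delta$ with $\Delta(1)=1\otimes1$ and $\Delta(x\cdot y)=\Delta(x)\cdot(1\otimes y)+(x\otimes1)\cdot\Delta(y)-x\otimes y$, the product on $\mathcal H\otimes\mathcal H$ being componentwise. $\bar{\mathcal H}$ = kernel of the counit; $\delta(x)=\Delta(x)-x\otimes1-1\otimes x$ on $\bar{\mathcal H}$; $\delta^1=\delta$, $\delta^n=(\delta\otimes\mathrm{id}^{\otimes(n-1)})\circ\delta^{n-1}$. Connected means: for each $x\in\bar{\mathcal H}$, $\delta^n(x)=0$ for $n$ large. $\omega^m$ is the left comb ($\omega^1(x)=x$, $\omega^m(x_1,\dots,x_m)=\omega^{m-1}(x_1,\dots,x_{m-1})\cdot x_m$) and $\omega_r^m$ the right comb ($\omega_r^1(x)=x$, $\omega_r^m(x_1,\dots,x_m)=x_1\cdot\omega_r^{m-1}(x_2,\dots,x_m)$), applied to the tensor factors of an element of $\bar{\mathcal H}^{\otimes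 m}$. *)

theory Defs
  imports Complex_Main
begin

text \<open>
  An element of the tensor power H^(tensor n) (n \<ge> 1) is represented by a
  finite list of pure tensors, each pure tensor x1 \<otimes> ... \<otimes> xn being a list [x1,...,xn]
  of length n; the list denotes the sum of its pure tensors (scalars are absorbed in
  the first factor, the empty list is the zero tensor). Two representatives denote
  the same tensor iff their formal difference lies in the subspace spanned by the
  multilinearity relations, i.e. H^(tensor n) is literally the free vector space on
  n-tuples modulo multilinearity.
\<close>

definition delta_at :: "'a list \<Rightarrow> 'a list \<Rightarrow> 'k::field" where
  "delta_at l = (\<lambda>m. if m = l then 1 else 0)"

inductive_set tens_rel :: "('k::field \<Rightarrow> 'a::ab_group_add \<Rightarrow> 'a) \<Rightarrow> ('a list \<Rightarrow> 'k) set"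
  for scale :: "'k::field \<Rightarrow> 'a::ab_group_add \<Rightarrow> 'a" where
  zero: "(\<lambda>_. 0) \<in> tens_rel scale"
| gen_add: "(\<lambda>m. delta_at (xs @ [a + b] @ ys) m - delta_at (xs @ [a] @ ys) m
               - delta_at (xs @ [b] @ ys) m) \<in> tens_rel scale"
| gen_scale: "(\<lambda>m. delta_at (xs @ [scale c a] @ ys) m - c * delta_at (xs @ [a] @ ys) m)
               \<in> tens_rel scale"
| add: "f \<in> tens_rel scale \<Longrightarrow> g \<in> tens_rel scale \<Longrightarrow> (\<lambda>m. f m + g m) \<in> tens_rel scale"
| smult: "f \<in> tens_rel scale \<Longrightarrow> (\<lambda>m. c * f m) \<in> tens_rel scale"

definition fsum :: "'a list list \<Rightarrow> 'a list \<Rightarrow> 'k::field" where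
  "fsum ts = (\<lambda>l. of_nat (count_list ts l))"

definition teq :: "('k::field \<Rightarrow> 'a::ab_group_add \<Rightarrow> 'a) \<Rightarrow> 'a list list \<Rightarrow> 'a list list \<Rightarrow> bool" where
  "teq scale ts us \<longleftrightarrow> (\<lambda>l. fsum ts l - fsum us l) \<in> tens_rel scale"

text \<open>Apply a map f : H \<rightarrow> H^(tensor k) (given by representatives) in slot i of every
  pure tensor, i.e. id^(tensor i) \<otimes> f \<otimes> id^(tensor ...).\<close>
definition tmap_slot :: "nat \<Rightarrow> ('a \<Rightarrow> 'a list list) \<Rightarrow> 'a list list \<Rightarrow> 'a list list" where
  "tmap_slot i f ts = concat (map (\<lambda>l. map (\<lambda>p. take i l @ p @ drop (Suc i) l) (f (l ! i))) ts)"

text \<open>Left comb omega^m and right comb omega_r^m on an m-tuple (m \<ge> 1).\<close>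
fun lcomb :: "('a \<Rightarrow> 'a \<Rightarrow> 'a) \<Rightarrow> 'a list \<Rightarrow> 'a" where
  "lcomb mult [] = undefined"
| "lcomb mult (x # xs) = foldl mult x xs"

fun rcomb :: "('a \<Rightarrow> 'a \<Rightarrow> 'a) \<Rightarrow> 'a list \<Rightarrow> 'a" where
  "rcomb mult [] = undefined"
| "rcomb mult [x] = x"
| "rcomb mult (x # y # ys) = mult x (rcomb mult (y # ys))"

definition proj :: "('k::field \<Rightarrow> 'a::ab_group_add \<Rightarrow> 'a) \<Rightarrow> ('a \<Rightarrow> 'k) \<Rightarrow> 'a \<Rightarrow> 'a \<Rightarrow> 'a" where
  "proj scale eps u x = x - scale (eps x) u"

text \<open>Reduced coproduct delta(x) = Delta(x) - x\<otimes>1 - 1\<otimes>x, represented with factors in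
  H-bar (we apply proj\<otimes>proj, which is the identity on H-bar\<otimes>H-bar, where delta takes
  its values for x in H-bar).\<close>
definition rcoprod :: "('k::field \<Rightarrow> 'a::ab_group_add \<Rightarrow> 'a) \<Rightarrow> ('a \<Rightarrow> 'k) \<Rightarrow> 'a
     \<Rightarrow> ('a \<Rightarrow> 'a list list) \<Rightarrow> 'a \<Rightarrow> 'a list list" where
  "rcoprod scale eps u Delta x =
     map (map (proj scale eps u)) (Delta x @ [[scale (-1) x, u], [u, scale (-1) x]])"

text \<open>Iterated reduced coproduct: dpow 0 x = x, dpow n = (delta \<otimes> id^(n-1)) o dpow (n-1);
  dpow n x represents delta^n(x) in H-bar^(tensor (n+1)).\<close>
fun dpow :: "('k::field \<Rightarrow> 'a::ab_group_add \<Rightarrow> 'a) \<Rightarrow> ('a \<Rightarrow> 'k) \<Rightarrow> 'a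
     \<Rightarrow> ('a \<Rightarrow> 'a list list) \<Rightarrow> nat \<Rightarrow> 'a \<Rightarrow> 'a list list" where
  "dpow scale eps u Delta 0 x = [[x]]"
| "dpow scale eps u Delta (Suc n) x = tmap_slot 0 (rcoprod scale eps u Delta) (dpow scale eps u Delta n x)"

definition tapply :: "('a list \<Rightarrow> 'a::ab_group_add) \<Rightarrow> 'a list list \<Rightarrow> 'a" where
  "tapply g ts = sum_list (map g ts)"

definition cdeg :: "('k::field \<Rightarrow> 'a::ab_group_add \<Rightarrow> 'a) \<Rightarrow> ('a \<Rightarrow> 'k) \<Rightarrow> 'a
     \<Rightarrow> ('a \<Rightarrow> 'a list list) \<Rightarrow> 'a \<Rightarrow> nat" where
  "cdeg scale eps u Delta x = (LEAST n. teq scale (dpow scale eps u Delta n x) [])"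

text \<open>e = id + sum_{n\<ge>1} (-1)^n omega^(n+1) o delta^n (a finite sum on a connected bialgebra:
  terms with n \<ge> cdeg x vanish).\<close>
definition eproj :: "('k::field \<Rightarrow> 'a::ab_group_add \<Rightarrow> 'a) \<Rightarrow> ('a \<Rightarrow> 'a \<Rightarrow> 'a) \<Rightarrow> ('a \<Rightarrow> 'k) \<Rightarrow> 'a
     \<Rightarrow> ('a \<Rightarrow> 'a list list) \<Rightarrow> 'a \<Rightarrow> 'a" where
  "eproj scale mult eps u Delta x =
     x + (\<Sum>n\<in>{1..<cdeg scale eps u Delta x}.
            scale ((-1) ^ n) (tapply (lcomb mult) (dpow scale eps u Delta n x)))"

definition AsMag_bialgebra ::
  "('k::field \<Rightarrow> 'a::ab_group_add \<Rightarrow> 'a) \<Rightarrow> ('a \<Rightarrow> 'a \<Rightarrow> 'a) \<Rightarrow> 'a \<Rightarrow> ('a \<Rightarrow> 'a list list) \<Rightarrow> ('a \<Rightarrow> 'k) \<Rightarrow> bool"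
where
  "AsMag_bialgebra scale mult u Delta eps \<longleftrightarrow>
     vector_space scale
   \<and> (\<forall>x. Vector_Spaces.linear scale scale (mult x))
   \<and> (\<forall>y. Vector_Spaces.linear scale scale (\<lambda>x. mult x y))
   \<and> (\<forall>x. mult u x = x \<and> mult x u = x)
   \<and> (\<forall>x. \<forall>l\<in>set (Delta x). length l = 2)
   \<and> (\<forall>x y. teq scale (Delta (x + y)) (Delta x @ Delta y))
   \<and> (\<forall>c x. teq scale (Delta (scale c x)) (map (\<lambda>l. scale c (l ! 0) # tl l) (Delta x)))
   \<and> (\<forall>x. teq scale (tmap_slot 0 Delta (Delta x)) (tmap_slot 1 Delta (Delta x)))
   \<and> (\<forall>x y. eps (x + y) = eps x + eps y) \<and> (\<forall>c x. eps (scale c x) = c * eps x)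
   \<and> (\<forall>x. sum_list (map (\<lambda>l. scale (eps (l ! 0)) (l ! 1)) (Delta x)) = x)
   \<and> (\<forall>x. sum_list (map (\<lambda>l. scale (eps (l ! 1)) (l ! 0)) (Delta x)) = x)
   \<and> teq scale (Delta u) [[u, u]]
   \<and> (\<forall>x y. teq scale (Delta (mult x y))
              (map (\<lambda>l. [mult (l ! 0) u, mult (l ! 1) y]) (Delta x)
               @ map (\<lambda>l. [mult x (l ! 0), mult u (l ! 1)]) (Delta y)
               @ [[scale (-1) x, y]]))"

definition connected_bialg ::
  "('k::field \<Rightarrow> 'a::ab_group_add \<Rightarrow> 'a) \<Rightarrow> 'a \<Rightarrow> ('a \<Rightarrow> 'a list list) \<Rightarrow> ('a \<Rightarrow> 'k) \<Rightarrow> bool"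
where
  "connected_bialg scale u Delta eps \<longleftrightarrow>
     (\<forall>x. eps x = 0 \<longrightarrow> (\<exists>N. \<forall>n\<ge>N. teq scale (dpow scale eps u Delta n x) []))"

end

theory Submission
  imports Defs
begin

text \<open>
  Since \<open>\<omega>\<^sup>n\<^sup>+\<^sup>1 \<circ> \<delta>\<^sup>n = \<omega>\<^sup>2 \<circ> ((\<omega>\<^sup>n \<circ> \<delta>\<^sup>n\<^sup>-\<^sup>1) \<otimes> id) \<circ> \<delta>\<close>, summing with signs gives
  \<open>e = id - \<omega>\<^sup>2 \<circ> (e \<otimes> id) \<circ> \<delta>\<close> on H-bar; connectedness makes all sums finite and e linear.
  Put \<open>G\<^sub>n = \<omega>\<^sub>r\<^sup>n\<^sup>+\<^sup>1 \<circ> (e\<^sup>\<otimes>\<^sup>n \<otimes> id) \<circ> \<delta>\<^sup>n\<close>, so that \<open>G\<^sub>0 = id\<close>. Expanding the last tensor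
  factor by this identity, and using \<open>\<omega>\<^sub>r(a\<^sub>1,...,a\<^sub>n,\<omega>\<^sup>2(b,c)) = \<omega>\<^sub>r(a\<^sub>1,...,a\<^sub>n,b,c)\<close> together
  with coassociativity in the form \<open>(id\<^sup>\<otimes>\<^sup>n \<otimes> \<delta>) \<circ> \<delta>\<^sup>n = \<delta>\<^sup>n\<^sup>+\<^sup>1\<close>, gives
  \<open>G\<^sub>n = \<omega>\<^sub>r\<^sup>n\<^sup>+\<^sup>1 \<circ> e\<^sup>\<otimes>\<^sup>n\<^sup>+\<^sup>1 \<circ> \<delta>\<^sup>n + G\<^sub>n\<^sub>+\<^sub>1\<close>. Telescoping from \<open>G\<^sub>0\<close> to \<open>G\<^sub>N\<^sub>+\<^sub>1 = 0\<close> is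
  the claim.

  Tensors are lists of pure tensors; multilinear maps annihilate the relations
  defining the tensor product, so they can be evaluated on representatives.
\<close>

section \<open>Multilinear maps on represented tensors\<close>

definition multilinear :: "('k::field \<Rightarrow> 'a::ab_group_add \<Rightarrow> 'a) \<Rightarrow> nat \<Rightarrow> ('a list \<Rightarrow> 'a) \<Rightarrow> bool"
  where "multilinear scale k g \<longleftrightarrow>
    (\<forall>xs ys a b. Suc (length xs + length ys) = k \<longrightarrow>
       g (xs @ (a + b) # ys) = g (xs @ a # ys) + g (xs @ b # ys)) \<and>
    (\<forall>xs ys c a. Suc (length xs + length ys) = k \<longrightarrow>
       g (xs @ scale c a # ys) = scale c (g (xs @ a # ys)))"

lemma multilinearI:
  assumes "\<And>xs ys a b. Suc (length xs + length ys) = k \<Longrightarrow>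
             g (xs @ (a + b) # ys) = g (xs @ a # ys) + g (xs @ b # ys)"
    and "\<And>xs ys c a. Suc (length xs + length ys) = k \<Longrightarrow>
             g (xs @ scale c a # ys) = scale c (g (xs @ a # ys))"
  shows "multilinear scale k g"
  using assms by (auto simp: multilinear_def)

lemma multilinearD:
  assumes "multilinear scale k g" "Suc (length xs + length ys) = k"
  shows multilinear_add: "g (xs @ (a + b) # ys) = g (xs @ a # ys) + g (xs @ b # ys)"
    and multilinear_scale: "g (xs @ scale c a # ys) = scale c (g (xs @ a # ys))"
  using assms by (auto simp: multilinear_def)

lemma (in vector_space) multilinear_zero:
  "multilinear scale k g \<Longrightarrow> Suc (length xs + length ys) = k \<Longrightarrow> g (xs @ 0 # ys) = 0"
  using multilinear_scale[of scale k g xs ys 0 0] by simp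

lemma multilinear_append_left:
  "multilinear scale k g \<Longrightarrow> k = length zs + n \<Longrightarrow> multilinear scale n (\<lambda>p. g (zs @ p))"
  by (rule multilinearI) (auto dest: multilinearD[of _ _ _ "zs @ _"])

lemma multilinear_append_right:
  "multilinear scale k g \<Longrightarrow> k = n + length zs \<Longrightarrow> multilinear scale n (\<lambda>p. g (p @ zs))"
  by (rule multilinearI) (auto dest: multilinearD[of _ _ _ _ "_ @ zs"])

lemma multilinear_pairI:
  assumes "\<And>a b c. h [a + b, c] = h [a, c] + h [b, c]" "\<And>a b c. h [c, a + b] = h [c, a] + h [c, b]"
    and "\<And>s a c. h [scale s a, c] = scale s (h [a, c])" "\<And>s a c. h [c, scale s a] = scale s (h [c, a])"
  shows "multilinear scale 2 h"
proof (rule multilinearI)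
  fix xs ys :: "'a list"
  assume "Suc (length xs + length ys) = 2"
  then have pair: "(\<exists>c. xs = [] \<and> ys = [c]) \<or> (\<exists>c. xs = [c] \<and> ys = [])"
    by (cases xs; cases ys) auto
  show "h (xs @ (a + b) # ys) = h (xs @ a # ys) + h (xs @ b # ys)" for a b
    using pair by (auto simp: assms)
  show "h (xs @ scale s a # ys) = scale s (h (xs @ a # ys))" for s a
    using pair by (auto simp: assms)
qed

lemma length_eq_2E:
  assumes "length l = 2"
  obtains a b where "l = [a, b]"
  using assms by (metis (no_types) length_0_conv length_Suc_conv numeral_2_eq_2)

lemma tapply_Nil [simp]: "tapply g [] = 0"
  and tapply_Cons [simp]: "tapply g (l # ts) = g l + tapply g ts"
  and tapply_append [simp]: "tapply g (ts @ us) = tapply g ts + tapply g us"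
  by (simp_all add: tapply_def)

lemma tapply_map: "tapply g (map f ts) = tapply (\<lambda>l. g (f l)) ts"
  by (induction ts) auto

lemma tapply_cong:
  "ts = us \<Longrightarrow> (\<And>l. l \<in> set us \<Longrightarrow> g l = h l) \<Longrightarrow> tapply g ts = tapply h us"
  by (induction ts arbitrary: us) auto

lemma tapply_zero [simp]: "tapply (\<lambda>l. 0) ts = 0"
  by (induction ts) auto

lemma tapply_add: "tapply (\<lambda>l. g l + h l) ts = tapply g ts + tapply h ts"
  by (induction ts) (simp_all add: add_ac)

lemma tapply_sum: "tapply (\<lambda>l. \<Sum>k\<in>K. f k l) ts = (\<Sum>k\<in>K. tapply (f k) ts)"
  by (induction ts) (auto simp: sum.distrib)

lemma additive_tapply:
  fixes f :: "'a::ab_group_add \<Rightarrow> 'a"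
  assumes "additive f"
  shows "f (tapply g ts) = tapply (\<lambda>l. f (g l)) ts"
  by (induction ts) (simp_all add: additive.zero[OF assms] additive.add[OF assms])

lemma (in vector_space) tapply_scale: "tapply (\<lambda>l. scale c (g l)) ts = scale c (tapply g ts)"
  by (induction ts) (simp_all add: scale_right_distrib)

lemma tapply_swap:
  "tapply (\<lambda>p. tapply (\<lambda>q. f p q) qs) ps = tapply (\<lambda>q. tapply (\<lambda>p. f p q) ps) qs"
  by (induction ps) (auto simp: tapply_add)

lemma tapply_tmap_slot:
  "tapply g (tmap_slot i f ts)
     = tapply (\<lambda>l. tapply (\<lambda>p. g (take i l @ p @ drop (Suc i) l)) (f (l ! i))) ts"
  by (induction ts) (simp_all add: tmap_slot_def tapply_map)

lemma tmap_slot_Nil [simp]: "tmap_slot i f [] = []"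
  and tmap_slot_append [simp]: "tmap_slot i f (ts @ us) = tmap_slot i f ts @ tmap_slot i f us"
  and tmap_slot_Cons: "tmap_slot i f (l # ts) = tmap_slot i f [l] @ tmap_slot i f ts"
  by (simp_all add: tmap_slot_def)

lemma tapply_tmap_slot_single:
  "tapply g (tmap_slot i f ts) = tapply (\<lambda>l. tapply g (tmap_slot i f [l])) ts"
proof (induction ts)
  case (Cons l ts)
  then show ?case by (simp add: tmap_slot_Cons[of _ _ l ts])
qed simp

lemma set_tmap_slot:
  "set (tmap_slot i f ts) = (\<Union>l\<in>set ts. (\<lambda>p. take i l @ p @ drop (Suc i) l) ` set (f (l ! i)))"
  by (auto simp: tmap_slot_def)

lemma tmap_slot_0_singleton [simp]: "tmap_slot 0 f [[x]] = f x"
  by (simp add: tmap_slot_def)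

lemma tmap_slot_0_assoc:
  assumes "\<And>z p. p \<in> set (f z) \<Longrightarrow> p \<noteq> []"
  shows "tmap_slot 0 g (tmap_slot 0 f ts) = tmap_slot 0 (\<lambda>z. tmap_slot 0 g (f z)) ts"
proof -
  have "Suc 0 - length p = 0" "(p @ r) ! 0 = p ! 0" if "p \<in> set (f z)" for p r z
    using assms[OF that] by (cases p; simp)+
  then show ?thesis
    unfolding tmap_slot_def by (induction ts) (simp_all add: map_concat comp_def cong: map_cong)
qed

lemma tapply_tmap_slot_interchange:
  assumes "\<And>z p. p \<in> set (h z) \<Longrightarrow> length p = 2" "\<forall>l\<in>set ts. Suc j < length l"
  shows "tapply g (tmap_slot (Suc (Suc j)) f (tmap_slot 0 h ts))
       = tapply g (tmap_slot 0 h (tmap_slot (Suc j) f ts))"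
proof -
  have "tapply g (tmap_slot (Suc (Suc j)) f (tmap_slot 0 h [l]))
      = tapply g (tmap_slot 0 h (tmap_slot (Suc j) f [l]))" if l: "Suc j < length l" for l
  proof -
    let ?g = "\<lambda>p q. g (p @ drop 1 (take (Suc j) l) @ q @ drop (Suc (Suc j)) l)"
    have "tapply g (tmap_slot (Suc (Suc j)) f (tmap_slot 0 h [l]))
        = tapply (\<lambda>p. tapply (?g p) (f (l ! Suc j))) (h (l ! 0))"
      unfolding tapply_tmap_slot
      using l by (auto simp: tapply_map nth_append nth_drop drop_take assms(1) intro!: tapply_cong)
    also have "\<dots> = tapply (\<lambda>q. tapply (\<lambda>p. ?g p q) (h (l ! 0))) (f (l ! Suc j))"
      by (rule tapply_swap)
    also have "\<dots> = tapply g (tmap_slot 0 h (tmap_slot (Suc j) f [l]))"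
    proof -
      have "l \<noteq> []" "min (length l) (Suc j) = Suc j" using l by auto
      then show ?thesis
        unfolding tapply_tmap_slot by (simp add: tapply_map nth_append nth_take)
    qed
    finally show ?thesis .
  qed
  with assms(2) show ?thesis
  proof (induction ts)
    case (Cons l ts)
    then show ?case by (simp add: tmap_slot_Cons[of _ _ l ts])
  qed simp
qed

lemma tens_rel_finite_support: "f \<in> tens_rel scale \<Longrightarrow> finite {l. f l \<noteq> 0}"
proof (induction rule: tens_rel.induct)
  case (gen_add xs a b ys)
  show ?case
    by (rule finite_subset[of _ "{xs @ [a + b] @ ys, xs @ [a] @ ys, xs @ [b] @ ys}"])
      (auto simp: delta_at_def)
next
  case (gen_scale xs c a ys)
  show ?case
    by (rule finite_subset[of _ "{xs @ [scale c a] @ ys, xs @ [a] @ ys}"]) (auto simp: delta_at_def)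
next
  case (add f g)
  then show ?case by (auto intro: finite_subset[of _ "{l. f l \<noteq> 0} \<union> {l. g l \<noteq> 0}"])
next
  case (smult f c)
  then show ?case by (auto intro: finite_subset[of _ "{l. f l \<noteq> 0}"])
qed simp

definition tensor_eval ::
  "('k::field \<Rightarrow> 'a::ab_group_add \<Rightarrow> 'a) \<Rightarrow> nat \<Rightarrow> ('a list \<Rightarrow> 'a) \<Rightarrow> ('a list \<Rightarrow> 'k) \<Rightarrow> 'a"
  where "tensor_eval scale k g f = (\<Sum>l | f l \<noteq> 0 \<and> length l = k. scale (f l) (g l))"

lemma fsum_eq_0: "l \<notin> set ts \<Longrightarrow> fsum ts l = 0"
  by (simp add: fsum_def count_list_0_iff)

context vector_space
begin

lemma tensor_eval_superset:
  assumes "finite S" "{l. f l \<noteq> 0} \<subseteq> S"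
  shows "tensor_eval scale k g f = (\<Sum>l | l \<in> S \<and> length l = k. scale (f l) (g l))"
  unfolding tensor_eval_def
  by (rule sum.mono_neutral_left) (use assms in \<open>auto intro: finite_subset\<close>)

lemma sum_delta_at_scale:
  assumes "finite S" "A \<in> S"
  shows "(\<Sum>l | l \<in> S \<and> length l = k. scale (delta_at A l) (g l)) = (if length A = k then g A else 0)"
proof -
  have "(\<Sum>l | l \<in> S \<and> length l = k. scale (delta_at A l) (g l))
      = (\<Sum>l | l \<in> S \<and> length l = k. if l = A then g A else 0)"
    by (rule sum.cong) (auto simp: delta_at_def)
  with assms show ?thesis by (simp add: sum.delta)
qed

lemma tensor_eval_add:
  assumes "finite {l. f l \<noteq> 0}" "finite {l. h l \<noteq> 0}"
  shows "tensor_eval scale k g (\<lambda>m. f m + h m) = tensor_eval scale k g f + tensor_eval scale k g h"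
proof -
  let ?S = "{l. f l \<noteq> 0} \<union> {l. h l \<noteq> 0}"
  have fin: "finite ?S"
    using assms by simp
  have "tensor_eval scale k g (\<lambda>m. f m + h m)
      = (\<Sum>l | l \<in> ?S \<and> length l = k. scale (f l) (g l) + scale (h l) (g l))"
    by (subst tensor_eval_superset[OF fin]) (auto simp: scale_left_distrib)
  also have "\<dots> = tensor_eval scale k g f + tensor_eval scale k g h"
    by (simp add: sum.distrib tensor_eval_superset[OF fin])
  finally show ?thesis .
qed

lemma tensor_eval_smult:
  assumes fin: "finite {l. f l \<noteq> 0}"
  shows "tensor_eval scale k g (\<lambda>m. c * f m) = scale c (tensor_eval scale k g f)"
proof -
  have "tensor_eval scale k g (\<lambda>m. c * f m)
      = (\<Sum>l | l \<in> {l. f l \<noteq> 0} \<and> length l = k. scale c (scale (f l) (g l)))"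
    by (subst tensor_eval_superset[OF fin]) auto
  also have "\<dots> = scale c (tensor_eval scale k g f)"
    by (simp add: scale_sum_right tensor_eval_superset[OF fin])
  finally show ?thesis .
qed

lemma tensor_eval_tens_rel:
  assumes "multilinear scale k g" "f \<in> tens_rel scale"
  shows "tensor_eval scale k g f = 0"
  using assms(2)
proof (induction rule: tens_rel.induct)
  case (gen_add xs a b ys)
  let ?S = "{xs @ [a + b] @ ys, xs @ [a] @ ys, xs @ [b] @ ys}"
  have "tensor_eval scale k g (\<lambda>m. delta_at (xs @ [a + b] @ ys) m - delta_at (xs @ [a] @ ys) m
                                 - delta_at (xs @ [b] @ ys) m)
      = (\<Sum>l | l \<in> ?S \<and> length l = k. scale (delta_at (xs @ [a + b] @ ys) l) (g l)
           - scale (delta_at (xs @ [a] @ ys) l) (g l) - scale (delta_at (xs @ [b] @ ys) l) (g l))"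
    by (subst tensor_eval_superset[of ?S]) (auto simp: delta_at_def scale_left_diff_distrib)
  also have "\<dots> = 0"
    unfolding sum_subtractf
    by (subst sum_delta_at_scale, simp, simp)+ (simp add: multilinear_add[OF assms(1)])
  finally show ?case .
next
  case (gen_scale xs c a ys)
  let ?S = "{xs @ [scale c a] @ ys, xs @ [a] @ ys}"
  have "tensor_eval scale k g (\<lambda>m. delta_at (xs @ [scale c a] @ ys) m - c * delta_at (xs @ [a] @ ys) m)
      = (\<Sum>l | l \<in> ?S \<and> length l = k. scale (delta_at (xs @ [scale c a] @ ys) l) (g l)
           - scale c (scale (delta_at (xs @ [a] @ ys) l) (g l)))"
    by (subst tensor_eval_superset[of ?S]) (auto simp: delta_at_def scale_left_diff_distrib)
  also have "\<dots> = 0"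
    unfolding sum_subtractf scale_sum_right[symmetric]
    by (subst sum_delta_at_scale, simp, simp)+ (simp add: multilinear_scale[OF assms(1)])
  finally show ?case .
next
  case (add f h)
  then show ?case
    by (simp add: tensor_eval_add tens_rel_finite_support)
next
  case (smult f c)
  then show ?case
    by (simp add: tensor_eval_smult tens_rel_finite_support)
qed (simp add: tensor_eval_def)

lemma tapply_eq_sum_fsum: "tapply g ts = (\<Sum>l\<in>set ts. scale (fsum ts l) (g l))"
proof (induction ts)
  case (Cons t ts)
  have fsum_Cons: "scale (fsum (t # ts) l) (g l) = scale (fsum ts l) (g l) + (if l = t then g t else 0)"
    for l by (auto simp: fsum_def scale_left_distrib)
  have "(\<Sum>l\<in>set (t # ts). scale (fsum ts l) (g l)) = (\<Sum>l\<in>set ts. scale (fsum ts l) (g l))"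
    by (rule sum.mono_neutral_right) (auto simp: fsum_eq_0)
  with Cons.IH show ?case
    by (simp add: fsum_Cons sum.distrib sum.delta tapply_def)
qed (simp add: tapply_def)

lemma tapply_eq_sum_superset:
  assumes "finite S" "set ts \<subseteq> S" "\<forall>l\<in>set ts. length l = k"
  shows "tapply g ts = (\<Sum>l | l \<in> S \<and> length l = k. scale (fsum ts l) (g l))"
  unfolding tapply_eq_sum_fsum
  by (rule sum.mono_neutral_left) (use assms in \<open>auto simp: fsum_eq_0\<close>)

theorem tapply_teq:
  assumes "multilinear scale k g" "teq scale ts us"
    and "\<forall>l\<in>set ts. length l = k" "\<forall>l\<in>set us. length l = k"
  shows "tapply g ts = tapply g us"
proof -
  let ?S = "set ts \<union> set us"
  have support: "{l. fsum ts l - fsum us l \<noteq> (0::'a)} \<subseteq> ?S"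
    by (auto intro: ccontr simp: fsum_eq_0)
  have "0 = tensor_eval scale k g (\<lambda>l. fsum ts l - fsum us l)"
    using tensor_eval_tens_rel assms(1,2) by (simp add: teq_def)
  also have "\<dots> = (\<Sum>l | l \<in> ?S \<and> length l = k. scale (fsum ts l) (g l))
                 - (\<Sum>l | l \<in> ?S \<and> length l = k. scale (fsum us l) (g l))"
    by (simp add: tensor_eval_superset[OF _ support] scale_left_diff_distrib sum_subtractf)
  also have "\<dots> = tapply g ts - tapply g us"
    using tapply_eq_sum_superset[of ?S ts k g] tapply_eq_sum_superset[of ?S us k g] assms(3,4)
    by simp
  finally show ?thesis by simp
qed

end

section \<open>\<open>As\<^sup>c-Mag\<close>-bialgebras\<close>

locale asmag_bialgebra =
  fixes scale :: "'k::field \<Rightarrow> 'a::ab_group_add \<Rightarrow> 'a" and mult :: "'a \<Rightarrow> 'a \<Rightarrow> 'a"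
    and u :: 'a and Delta :: "'a \<Rightarrow> 'a list list" and eps :: "'a \<Rightarrow> 'k"
  assumes bialgebra: "AsMag_bialgebra scale mult u Delta eps"
begin

sublocale vector_space scale
  using bialgebra by (simp add: AsMag_bialgebra_def)

lemma mult_add_right: "mult x (a + b) = mult x a + mult x b"
  and mult_scale_right: "mult x (scale c a) = scale c (mult x a)"
  and mult_add_left: "mult (a + b) y = mult a y + mult b y"
  and mult_scale_left: "mult (scale c a) y = scale c (mult a y)"
  using bialgebra
  by (simp_all add: AsMag_bialgebra_def linear_iff_module_hom module_hom_iff)

lemma additive_mult_left: "additive (\<lambda>x. mult x y)"
  by unfold_locales (rule mult_add_left)

lemma mult_unit_left: "mult u x = x"
  and length_Delta: "l \<in> set (Delta x) \<Longrightarrow> length l = 2"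
  and Delta_add: "teq scale (Delta (x + y)) (Delta x @ Delta y)"
  and Delta_scale: "teq scale (Delta (scale c x)) (map (\<lambda>l. scale c (l ! 0) # tl l) (Delta x))"
  and Delta_coassoc: "teq scale (tmap_slot 0 Delta (Delta x)) (tmap_slot 1 Delta (Delta x))"
  and eps_add: "eps (x + y) = eps x + eps y"
  and eps_scale: "eps (scale c x) = c * eps x"
  and counit: "sum_list (map (\<lambda>l. scale (eps (l ! 0)) (l ! 1)) (Delta x)) = x"
  and Delta_unit: "teq scale (Delta u) [[u, u]]"
  using bialgebra by (simp_all add: AsMag_bialgebra_def)

lemma eps_zero [simp]: "eps 0 = 0"
  using eps_scale[of 0 0] by simp

lemma trivial_if_unit_zero:
  assumes "u = 0"
  shows "(z::'a) = 0"
proof -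
  have "mult 0 z = 0"
    using mult_add_left[of 0 0 z] by simp
  then show ?thesis
    using mult_unit_left[of z] assms by simp
qed

lemma multilinear_counit: "multilinear scale 2 (\<lambda>l. scale (eps (l ! 0)) (l ! 1))"
  by (rule multilinear_pairI)
    (simp_all add: eps_add eps_scale scale_left_distrib scale_right_distrib mult.commute)

lemma eps_unit_cases: "u = 0 \<or> eps u = 1"
proof -
  have "u = tapply (\<lambda>l. scale (eps (l ! 0)) (l ! 1)) (Delta u)"
    using counit[of u] by (simp add: tapply_def)
  also have "\<dots> = tapply (\<lambda>l. scale (eps (l ! 0)) (l ! 1)) [[u, u]]"
    by (rule tapply_teq[OF multilinear_counit Delta_unit]) (simp_all add: length_Delta)
  finally have "scale (eps u - 1) u = 0"
    by (simp add: scale_left_diff_distrib)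
  then show ?thesis
    by auto
qed

lemma lcomb_snoc: "xs \<noteq> [] \<Longrightarrow> lcomb mult (xs @ [b]) = mult (lcomb mult xs) b"
  by (cases xs) auto

lemma lcomb_add: "lcomb mult (xs @ (a + b) # ys) = lcomb mult (xs @ a # ys) + lcomb mult (xs @ b # ys)"
  and lcomb_scale: "lcomb mult (xs @ scale c a # ys) = scale c (lcomb mult (xs @ a # ys))"
proof (induction ys rule: rev_induct)
  case Nil
  show "lcomb mult (xs @ [a + b]) = lcomb mult (xs @ [a]) + lcomb mult (xs @ [b])"
    and "lcomb mult (xs @ [scale c a]) = scale c (lcomb mult (xs @ [a]))"
    by (cases "xs = []"; simp add: lcomb_snoc mult_add_right mult_scale_right)+
next
  case (snoc y ys)
  then show "lcomb mult (xs @ (a + b) # ys @ [y]) = lcomb mult (xs @ a # ys @ [y]) + lcomb mult (xs @ b # ys @ [y])"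
    and "lcomb mult (xs @ scale c a # ys @ [y]) = scale c (lcomb mult (xs @ a # ys @ [y]))"
    using lcomb_snoc[of "xs @ _ # ys" y] by (simp_all add: mult_add_left mult_scale_left)
qed

lemma multilinear_lcomb: "multilinear scale k (lcomb mult)"
  by (rule multilinearI) (simp_all add: lcomb_add lcomb_scale)

lemma rcomb_Cons: "ys \<noteq> [] \<Longrightarrow> rcomb mult (x # ys) = mult x (rcomb mult ys)"
  by (cases ys) auto

lemma rcomb_add: "rcomb mult (xs @ (a + b) # ys) = rcomb mult (xs @ a # ys) + rcomb mult (xs @ b # ys)"
  and rcomb_scale: "rcomb mult (xs @ scale c a # ys) = scale c (rcomb mult (xs @ a # ys))"
  by (induction xs) (cases "ys = []"; simp add: rcomb_Cons mult_add_left mult_add_right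
      mult_scale_left mult_scale_right)+

lemma multilinear_rcomb: "multilinear scale k (rcomb mult)"
  by (rule multilinearI) (simp_all add: rcomb_add rcomb_scale)

lemma rcomb_snoc_mult: "rcomb mult (xs @ [mult a b]) = rcomb mult (xs @ [a, b])"
  by (induction xs) (simp_all add: rcomb_Cons)

end

section \<open>The reduced coproduct\<close>

locale connected_asmag_bialgebra = asmag_bialgebra +
  assumes connected: "connected_bialg scale u Delta eps"
    and unit_nonzero: "u \<noteq> 0"
begin

lemma eps_unit [simp]: "eps u = 1"
  using eps_unit_cases unit_nonzero by blast

abbreviation \<pi> where "\<pi> \<equiv> proj scale eps u"
abbreviation \<delta> where "\<delta> \<equiv> rcoprod scale eps u Delta"
abbreviation \<delta>pow where "\<delta>pow \<equiv> dpow scale eps u Delta"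

lemma proj_add: "\<pi> (a + b) = \<pi> a + \<pi> b"
  by (simp add: proj_def eps_add scale_left_distrib)

lemma proj_scale: "\<pi> (scale c a) = scale c (\<pi> a)"
  by (simp add: proj_def eps_scale scale_right_diff_distrib)

lemma eps_proj [simp]: "eps (\<pi> a) = 0"
  using eps_add[of "\<pi> a" "scale (eps a) u"] by (simp add: proj_def eps_scale)

lemma proj_unit [simp]: "\<pi> u = 0"
  by (simp add: proj_def)

lemma proj_id: "eps a = 0 \<Longrightarrow> \<pi> a = a"
  by (simp add: proj_def)

lemma multilinear_map_proj: "multilinear scale k g \<Longrightarrow> multilinear scale k (\<lambda>l. g (map \<pi> l))"
  by (rule multilinearI) (simp_all add: multilinear_add multilinear_scale proj_add proj_scale)

lemma length_rcoprod: "p \<in> set (\<delta> y) \<Longrightarrow> length p = 2"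
  by (auto simp: rcoprod_def length_Delta)

lemma eps_rcoprod: "p \<in> set (\<delta> y) \<Longrightarrow> z \<in> set p \<Longrightarrow> eps z = 0"
  by (auto simp: rcoprod_def)

text \<open>The correction terms \<open>-y \<otimes> 1 - 1 \<otimes> y\<close> of the reduced coproduct are
  killed by \<open>\<pi> \<otimes> \<pi>\<close>, since \<open>\<pi> 1 = 0\<close>.\<close>
lemma tapply_rcoprod:
  "multilinear scale 2 h \<Longrightarrow> tapply h (\<delta> y) = tapply (\<lambda>p. h (map \<pi> p)) (Delta y)"
  using multilinear_zero[of 2 h "[_]" "[]"] multilinear_zero[of 2 h "[]" "[_]"]
  by (simp add: rcoprod_def tapply_map)

lemma tapply_rcoprod_add:
  assumes "multilinear scale 2 h"
  shows "tapply h (\<delta> (a + b)) = tapply h (\<delta> a) + tapply h (\<delta> b)"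
proof -
  have "tapply (\<lambda>p. h (map \<pi> p)) (Delta (a + b)) = tapply (\<lambda>p. h (map \<pi> p)) (Delta a @ Delta b)"
    by (rule tapply_teq[OF multilinear_map_proj[OF assms] Delta_add]) (auto simp: length_Delta)
  then show ?thesis
    by (simp add: tapply_rcoprod[OF assms])
qed

lemma tapply_rcoprod_scale:
  assumes "multilinear scale 2 h"
  shows "tapply h (\<delta> (scale c a)) = scale c (tapply h (\<delta> a))"
proof -
  have "tapply (\<lambda>p. h (map \<pi> p)) (Delta (scale c a))
      = tapply (\<lambda>p. h (map \<pi> p)) (map (\<lambda>l. scale c (l ! 0) # tl l) (Delta a))"
    by (rule tapply_teq[OF multilinear_map_proj[OF assms] Delta_scale]) (auto simp: length_Delta)
  also have "\<dots> = tapply (\<lambda>p. scale c (h (map \<pi> p))) (Delta a)"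
    unfolding tapply_map
  proof (rule tapply_cong[OF refl])
    fix l assume "l \<in> set (Delta a)"
    then obtain x y where "l = [x, y]"
      using length_Delta length_eq_2E by blast
    then show "h (map \<pi> (scale c (l ! 0) # tl l)) = scale c (h (map \<pi> l))"
      using multilinear_scale[OF assms, of "[]" "[\<pi> y]" c "\<pi> x"] by (simp add: proj_scale)
  qed
  finally show ?thesis
    by (simp add: tapply_rcoprod[OF assms] tapply_scale)
qed

lemma tapply_rcoprod_unit:
  assumes "multilinear scale 2 h"
  shows "tapply h (\<delta> u) = 0"
proof -
  have "tapply (\<lambda>p. h (map \<pi> p)) (Delta u) = tapply (\<lambda>p. h (map \<pi> p)) [[u, u]]"
    by (rule tapply_teq[OF multilinear_map_proj[OF assms] Delta_unit]) (auto simp: length_Delta)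
  then show ?thesis
    using multilinear_zero[OF assms, of "[]" "[0]"] by (simp add: tapply_rcoprod[OF assms])
qed

lemma tapply_rcoprod_proj:
  assumes "multilinear scale 2 h"
  shows "tapply h (\<delta> (\<pi> a)) = tapply h (\<delta> a)"
proof -
  have "tapply h (\<delta> (\<pi> a)) = tapply h (\<delta> (a + scale (- eps a) u))"
    by (simp add: proj_def)
  also have "\<dots> = tapply h (\<delta> a)"
    unfolding tapply_rcoprod_add[OF assms] tapply_rcoprod_scale[OF assms]
      tapply_rcoprod_unit[OF assms] by simp
  finally show ?thesis .
qed

lemma tapply_rcoprod_first_linear:
  assumes g: "multilinear scale (Suc (Suc k)) g" and len: "Suc (length xs + length ys) = Suc k"
  shows "tapply g (tmap_slot 0 \<delta> [xs @ (a + b) # ys])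
      = tapply g (tmap_slot 0 \<delta> [xs @ a # ys]) + tapply g (tmap_slot 0 \<delta> [xs @ b # ys])
    \<and> tapply g (tmap_slot 0 \<delta> [xs @ scale c a # ys])
      = scale c (tapply g (tmap_slot 0 \<delta> [xs @ a # ys]))"
proof (cases xs)
  case Nil
  have "multilinear scale 2 (\<lambda>p. g (p @ ys))"
    by (rule multilinear_append_right[OF g]) (use len Nil in simp)
  with Nil show ?thesis
    by (simp add: tapply_tmap_slot tapply_rcoprod_add tapply_rcoprod_scale)
next
  case (Cons x xs')
  have "g (p @ xs' @ (a + b) # ys) = g (p @ xs' @ a # ys) + g (p @ xs' @ b # ys)"
    "g (p @ xs' @ scale c a # ys) = scale c (g (p @ xs' @ a # ys))" if "p \<in> set (\<delta> x)" for p
    using multilinearD[OF g, of "p @ xs'" ys] length_rcoprod[OF that] len Cons by simp_all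
  with Cons show ?thesis
    by (simp add: tapply_tmap_slot tapply_add tapply_scale cong: tapply_cong)
qed

lemma multilinear_rcoprod_first:
  "multilinear scale (Suc (Suc k)) g \<Longrightarrow>
    multilinear scale (Suc k) (\<lambda>l. tapply g (tmap_slot 0 \<delta> [l]))"
  by (rule multilinearI) (simp_all add: tapply_rcoprod_first_linear)

lemma multilinear_rcoprod_second:
  assumes g: "multilinear scale 3 g"
  shows "multilinear scale 2 (\<lambda>l. tapply g (tmap_slot 1 \<delta> [l]))"
proof (rule multilinear_pairI)
  have left: "multilinear scale 2 (\<lambda>p. g (c # p))" for c
    using multilinear_append_left[OF g, of "[c]" 2] by simp
  have "g ((a + b) # p) = g (a # p) + g (b # p)" "g (scale s a # p) = scale s (g (a # p))"
    if "p \<in> set (\<delta> c)" for a b c s p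
    using multilinearD[OF g, of "[]" p] length_rcoprod[OF that] by simp_all
  then show "tapply g (tmap_slot 1 \<delta> [[a + b, c]])
      = tapply g (tmap_slot 1 \<delta> [[a, c]]) + tapply g (tmap_slot 1 \<delta> [[b, c]])"
    and "tapply g (tmap_slot 1 \<delta> [[scale s a, c]]) = scale s (tapply g (tmap_slot 1 \<delta> [[a, c]]))"
    for a b c s
    by (simp_all add: tapply_tmap_slot tapply_add tapply_scale cong: tapply_cong)
  show "tapply g (tmap_slot 1 \<delta> [[c, a + b]])
      = tapply g (tmap_slot 1 \<delta> [[c, a]]) + tapply g (tmap_slot 1 \<delta> [[c, b]])"
    and "tapply g (tmap_slot 1 \<delta> [[c, scale s a]]) = scale s (tapply g (tmap_slot 1 \<delta> [[c, a]]))"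
    for a b c s
    using left by (simp_all add: tapply_tmap_slot tapply_rcoprod_add tapply_rcoprod_scale)
qed

lemma tapply_tmap_slot_rcoprod_pair:
  assumes g: "multilinear scale 3 g" and "i < 2" "length l = 2"
  shows "tapply g (tmap_slot i \<delta> [map \<pi> l]) = tapply (\<lambda>q. g (map \<pi> q)) (tmap_slot i Delta [l])"
proof -
  obtain a b where l: "l = [a, b]"
    using \<open>length l = 2\<close> by (rule length_eq_2E)
  have right: "multilinear scale 2 (\<lambda>p. g (p @ [\<pi> b]))"
    by (rule multilinear_append_right[OF g]) simp
  have left: "multilinear scale 2 (\<lambda>p. g (\<pi> a # p))"
    using multilinear_append_left[OF g, of "[\<pi> a]" 2] by simp
  from \<open>i < 2\<close> consider "i = 0" | "i = 1"
    by linarith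
  then show ?thesis
  proof cases
    case 1
    then show ?thesis
      using l by (simp add: tapply_tmap_slot tapply_rcoprod_proj[OF right]) (simp add: tapply_rcoprod[OF right])
  next
    case 2
    then show ?thesis
      using l by (simp add: tapply_tmap_slot tapply_rcoprod_proj[OF left]) (simp add: tapply_rcoprod[OF left])
  qed
qed

lemma tapply_tmap_slot_rcoprod_rcoprod:
  assumes g: "multilinear scale 3 g" and "i < 2"
  shows "tapply g (tmap_slot i \<delta> (\<delta> x)) = tapply (\<lambda>q. g (map \<pi> q)) (tmap_slot i Delta (Delta x))"
proof -
  have "multilinear scale 2 (\<lambda>l. tapply g (tmap_slot i \<delta> [l]))"
    using \<open>i < 2\<close> multilinear_rcoprod_first[of 1 g] multilinear_rcoprod_second[OF g] g
    by (cases i) (simp_all add: numeral_3_eq_3 numeral_2_eq_2)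
  then have "tapply g (tmap_slot i \<delta> (\<delta> x))
      = tapply (\<lambda>l. tapply g (tmap_slot i \<delta> [map \<pi> l])) (Delta x)"
    by (simp add: tapply_tmap_slot_single[of g i \<delta> "\<delta> x"] tapply_rcoprod)
  also have "\<dots> = tapply (\<lambda>q. g (map \<pi> q)) (tmap_slot i Delta (Delta x))"
    using tapply_tmap_slot_rcoprod_pair[OF assms] length_Delta
    by (simp add: tapply_tmap_slot_single[of _ i Delta "Delta x"] cong: tapply_cong)
  finally show ?thesis .
qed

theorem rcoprod_coassoc:
  assumes g: "multilinear scale 3 g"
  shows "tapply g (tmap_slot 0 \<delta> (\<delta> x)) = tapply g (tmap_slot 1 \<delta> (\<delta> x))"
proof -
  have len: "\<forall>l\<in>set (tmap_slot i Delta (Delta x)). length l = 3" if "i < 2" for i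
    using that length_Delta by (auto simp: set_tmap_slot)
  have "tapply (\<lambda>q. g (map \<pi> q)) (tmap_slot 0 Delta (Delta x))
      = tapply (\<lambda>q. g (map \<pi> q)) (tmap_slot 1 Delta (Delta x))"
    by (rule tapply_teq[OF multilinear_map_proj[OF g] Delta_coassoc len len]) simp_all
  then show ?thesis
    by (simp add: tapply_tmap_slot_rcoprod_rcoprod[OF g])
qed

section \<open>Iterated reduced coproducts\<close>

lemma length_dpow: "l \<in> set (\<delta>pow n x) \<Longrightarrow> length l = Suc n"
  by (induction n arbitrary: l) (auto simp: set_tmap_slot length_rcoprod)

lemma eps_dpow: "eps x = 0 \<Longrightarrow> l \<in> set (\<delta>pow n x) \<Longrightarrow> z \<in> set l \<Longrightarrow> eps z = 0"
  by (induction n arbitrary: l) (force simp: set_tmap_slot dest: eps_rcoprod in_set_dropD)+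

lemma tapply_dpow_Suc:
  "tapply g (\<delta>pow (Suc n) y) = tapply (\<lambda>l. tapply g (tmap_slot 0 \<delta> [l])) (\<delta>pow n y)"
  by (simp add: tapply_tmap_slot_single[of g 0 \<delta> "\<delta>pow n y"])

lemma dpow_Suc_right: "\<delta>pow (Suc n) y = tmap_slot 0 (\<delta>pow n) (\<delta> y)"
proof (induction n)
  case 0
  have "\<forall>l\<in>set (\<delta> y). l \<noteq> []"
    using length_rcoprod by fastforce
  then have "tmap_slot 0 (\<lambda>z. [[z]]) (\<delta> y) = \<delta> y"
    by (simp add: tmap_slot_def, intro map_idI) (auto simp: neq_Nil_conv)
  moreover have "\<delta>pow 0 = (\<lambda>z. [[z]])"
    by auto
  ultimately show ?case
    by simp
next
  case (Suc n)
  have "\<delta>pow (Suc (Suc n)) y = tmap_slot 0 \<delta> (tmap_slot 0 (\<delta>pow n) (\<delta> y))"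
    unfolding Suc.IH[symmetric] by simp
  also have "\<dots> = tmap_slot 0 (\<lambda>z. tmap_slot 0 \<delta> (\<delta>pow n z)) (\<delta> y)"
    using length_dpow by (intro tmap_slot_0_assoc) fastforce
  also have "(\<lambda>z. tmap_slot 0 \<delta> (\<delta>pow n z)) = \<delta>pow (Suc n)"
    by auto
  finally show ?case .
qed

lemma tapply_dpow_add:
  "multilinear scale (Suc n) g \<Longrightarrow>
    tapply g (\<delta>pow n (a + b)) = tapply g (\<delta>pow n a) + tapply g (\<delta>pow n b)"
proof (induction n arbitrary: g)
  case 0
  then show ?case using multilinear_add[of scale 1 g "[]" "[]"] by simp
qed (simp only: tapply_dpow_Suc multilinear_rcoprod_first)

lemma tapply_dpow_scale:
  "multilinear scale (Suc n) g \<Longrightarrow>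
    tapply g (\<delta>pow n (scale c a)) = scale c (tapply g (\<delta>pow n a))"
proof (induction n arbitrary: g)
  case 0
  then show ?case using multilinear_scale[of scale 1 g "[]" "[]"] by simp
qed (simp only: tapply_dpow_Suc multilinear_rcoprod_first)

lemma tapply_dpow_vanish:
  assumes "teq scale (\<delta>pow c y) []" "c \<le> n" "multilinear scale (Suc n) g"
  shows "tapply g (\<delta>pow n y) = 0"
  using assms(2,3)
proof (induction n arbitrary: g)
  case 0
  with assms(1) show ?case
    using tapply_teq[of 1 g "\<delta>pow 0 y" "[]"] by simp
next
  case (Suc n)
  show ?case
  proof (cases "c = Suc n")
    case True
    with assms(1) Suc.prems show ?thesis
      using tapply_teq[of "Suc (Suc n)" g "\<delta>pow (Suc n) y" "[]"] length_dpow by simp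
  next
    case False
    with Suc show ?thesis
      by (simp only: tapply_dpow_Suc) (simp add: multilinear_rcoprod_first)
  qed
qed

text \<open>Coassociativity in the form \<open>\<delta>\<^sup>n\<^sup>+\<^sup>1 = (id\<^sup>\<otimes>\<^sup>n \<otimes> \<delta>) \<circ> \<delta>\<^sup>n\<close>, whereas
  \<^const>\<open>dpow\<close> applies \<open>\<delta>\<close> in the first slot.\<close>
lemma tapply_dpow_Suc_last:
  "multilinear scale (Suc (Suc n)) g \<Longrightarrow>
    tapply g (tmap_slot n \<delta> (\<delta>pow n x)) = tapply g (\<delta>pow (Suc n) x)"
proof (induction n arbitrary: g)
  case (Suc n)
  show ?case
  proof (cases n)
    case 0
    with Suc.prems show ?thesis
      by (simp add: rcoprod_coassoc numeral_3_eq_3)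
  next
    case (Suc m)
    let ?g = "\<lambda>l. tapply g (tmap_slot 0 \<delta> [l])"
    have "tapply g (tmap_slot (Suc n) \<delta> (\<delta>pow (Suc n) x))
        = tapply g (tmap_slot 0 \<delta> (tmap_slot n \<delta> (\<delta>pow n x)))"
      using Suc length_dpow[of _ n x] length_rcoprod
      by (simp only: dpow.simps(2)) (rule tapply_tmap_slot_interchange; simp)
    also have "\<dots> = tapply ?g (tmap_slot n \<delta> (\<delta>pow n x))"
      by (rule tapply_tmap_slot_single)
    also have "\<dots> = tapply ?g (\<delta>pow (Suc n) x)"
      using Suc.prems by (intro Suc.IH multilinear_rcoprod_first)
    also have "\<dots> = tapply g (\<delta>pow (Suc (Suc n)) x)"
      by (rule tapply_dpow_Suc[symmetric])
    finally show ?thesis .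
  qed
qed simp

section \<open>The projection e\<close>

abbreviation e where "e \<equiv> eproj scale mult eps u Delta"
abbreviation deg where "deg \<equiv> cdeg scale eps u Delta"
abbreviation lcomb_dpow where "lcomb_dpow n y \<equiv> tapply (lcomb mult) (\<delta>pow n y)"

lemma lcomb_dpow_Suc:
  "lcomb_dpow (Suc n) y = tapply (\<lambda>l. mult (lcomb_dpow n (l ! 0)) (l ! 1)) (\<delta> y)"
  unfolding dpow_Suc_right tapply_tmap_slot
proof (rule tapply_cong[OF refl])
  fix l assume "l \<in> set (\<delta> y)"
  then obtain a b where l: "l = [a, b]"
    using length_rcoprod length_eq_2E by blast
  have "lcomb mult (q @ [b]) = mult (lcomb mult q) b" if "q \<in> set (\<delta>pow n a)" for q
    using length_dpow[OF that] by (intro lcomb_snoc) auto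
  then show "tapply (\<lambda>q. lcomb mult (take 0 l @ q @ drop (Suc 0) l)) (\<delta>pow n (l ! 0))
      = mult (lcomb_dpow n (l ! 0)) (l ! 1)"
    using l by (simp add: additive_tapply[OF additive_mult_left] cong: tapply_cong)
qed

lemma dpow_deg_vanishes:
  assumes "eps y = 0"
  shows "teq scale (\<delta>pow (deg y) y) []"
proof -
  obtain N where "\<forall>n\<ge>N. teq scale (\<delta>pow n y) []"
    using connected assms unfolding connected_bialg_def by blast
  then show ?thesis
    unfolding cdeg_def by (meson LeastI order_refl)
qed

lemma eproj_eq_sum:
  assumes "eps y = 0" "deg y \<le> Suc M"
  shows "e y = (\<Sum>n\<le>M. scale ((-1) ^ n) (lcomb_dpow n y))"
proof -
  let ?f = "\<lambda>n. scale ((-1) ^ n) (lcomb_dpow n y)"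
  have "(\<Sum>n\<in>{1..<deg y}. ?f n) = (\<Sum>n\<in>{Suc 0..M}. ?f n)"
    using tapply_dpow_vanish[OF dpow_deg_vanishes[OF assms(1)] _ multilinear_lcomb] assms(2)
    by (intro sum.mono_neutral_left) auto
  also have "\<dots> = (\<Sum>n<M. ?f (Suc n))"
    by (rule sum.atLeast1_atMost_eq)
  finally have "e y = ?f 0 + (\<Sum>n<M. ?f (Suc n))"
    by (simp add: eproj_def)
  then show ?thesis
    by (simp only: sum.atMost_shift)
qed

lemma eproj_add:
  assumes "eps a = 0" "eps b = 0"
  shows "e (a + b) = e a + e b"
proof -
  let ?M = "deg a + deg b + deg (a + b)"
  have "eps (a + b) = 0"
    using assms by (simp add: eps_add)
  then have "e (a + b) = (\<Sum>n\<le>?M. scale ((-1) ^ n) (lcomb_dpow n (a + b)))"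
    by (rule eproj_eq_sum) simp
  also have "\<dots> = (\<Sum>n\<le>?M. scale ((-1) ^ n) (lcomb_dpow n a))
                 + (\<Sum>n\<le>?M. scale ((-1) ^ n) (lcomb_dpow n b))"
    by (simp add: tapply_dpow_add[OF multilinear_lcomb] scale_right_distrib sum.distrib)
  also have "\<dots> = e a + e b"
    using eproj_eq_sum[OF assms(1), of ?M] eproj_eq_sum[OF assms(2), of ?M] by simp
  finally show ?thesis .
qed

lemma eproj_scale:
  assumes "eps a = 0"
  shows "e (scale c a) = scale c (e a)"
proof -
  let ?M = "deg a + deg (scale c a)"
  have "eps (scale c a) = 0"
    using assms by (simp add: eps_scale)
  then have "e (scale c a) = (\<Sum>n\<le>?M. scale ((-1) ^ n) (lcomb_dpow n (scale c a)))"
    by (rule eproj_eq_sum) simp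
  also have "\<dots> = scale c (\<Sum>n\<le>?M. scale ((-1) ^ n) (lcomb_dpow n a))"
    by (simp add: tapply_dpow_scale[OF multilinear_lcomb] scale_sum_right mult.commute)
  also have "\<dots> = scale c (e a)"
    using eproj_eq_sum[OF assms, of ?M] by simp
  finally show ?thesis .
qed

lemma eproj_decomposition:
  assumes "eps y = 0"
  shows "y = e y + tapply (\<lambda>l. mult (e (l ! 0)) (l ! 1)) (\<delta> y)"
proof -
  define M where "M = deg y + Max (insert 0 ((\<lambda>l. deg (l ! 0)) ` set (\<delta> y)))"
  let ?f = "\<lambda>n l. scale ((-1) ^ n) (mult (lcomb_dpow n (l ! 0)) (l ! 1))"
  have factor: "mult (e (l ! 0)) (l ! 1) = (\<Sum>n\<le>M. ?f n l)" if "l \<in> set (\<delta> y)" for l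
  proof -
    have "deg (l ! 0) \<le> Suc M"
      using that by (auto simp: M_def intro!: le_SucI trans_le_add2 Max_ge)
    moreover have "eps (l ! 0) = 0"
      using that length_rcoprod[OF that] by (intro eps_rcoprod) auto
    ultimately show ?thesis
      by (simp add: eproj_eq_sum additive.sum[OF additive_mult_left] mult_scale_left)
  qed
  have "e y = (\<Sum>n\<le>Suc M. scale ((-1) ^ n) (lcomb_dpow n y))"
    by (rule eproj_eq_sum[OF assms]) (simp add: M_def)
  also have "\<dots> = y + (\<Sum>n\<le>M. scale ((-1) ^ Suc n) (lcomb_dpow (Suc n) y))"
    by (simp only: sum.atMost_Suc_shift) simp
  also have "(\<Sum>n\<le>M. scale ((-1) ^ Suc n) (lcomb_dpow (Suc n) y))
      = - tapply (\<lambda>l. \<Sum>n\<le>M. ?f n l) (\<delta> y)"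
    by (simp only: lcomb_dpow_Suc) (simp add: tapply_sum tapply_scale sum_negf)
  also have "\<dots> = - tapply (\<lambda>l. mult (e (l ! 0)) (l ! 1)) (\<delta> y)"
    by (intro arg_cong[where f = uminus] tapply_cong[OF refl]) (subst factor; simp)
  finally show ?thesis
    by simp
qed

section \<open>Telescoping\<close>

text \<open>Extending e by zero on the unit makes it linear on all of H, which the
  multilinear maps evaluated on tensors below require.\<close>
definition eproj_lin where "eproj_lin z = e (\<pi> z)"

lemma eproj_lin_add: "eproj_lin (a + b) = eproj_lin a + eproj_lin b"
  by (simp add: eproj_lin_def proj_add eproj_add)

lemma eproj_lin_scale: "eproj_lin (scale c a) = scale c (eproj_lin a)"
  by (simp add: eproj_lin_def proj_scale eproj_scale)

lemma eproj_lin_eq: "eps z = 0 \<Longrightarrow> eproj_lin z = e z"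
  by (simp add: eproj_lin_def proj_id)

definition rcomb_eproj where "rcomb_eproj l = rcomb mult (map eproj_lin l)"

text \<open>\<open>G\<^sub>n\<close> of the proof idea is \<open>rcomb_eproj_butlast\<close> applied to \<open>\<delta>\<^sup>n\<close>.\<close>
definition rcomb_eproj_butlast where
  "rcomb_eproj_butlast l = rcomb mult (map eproj_lin (butlast l) @ [last l])"

lemma rcomb_eproj_butlast_linear:
  "rcomb_eproj_butlast (xs @ (a + b) # ys)
     = rcomb_eproj_butlast (xs @ a # ys) + rcomb_eproj_butlast (xs @ b # ys)
   \<and> rcomb_eproj_butlast (xs @ scale c a # ys) = scale c (rcomb_eproj_butlast (xs @ a # ys))"
  using rcomb_add[of "map eproj_lin xs"] rcomb_scale[of "map eproj_lin xs"]
  by (cases "ys = []")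
    (simp_all add: rcomb_eproj_butlast_def butlast_append eproj_lin_add eproj_lin_scale)

lemma multilinear_rcomb_eproj_butlast: "multilinear scale k rcomb_eproj_butlast"
  by (rule multilinearI) (simp_all add: rcomb_eproj_butlast_linear)

lemma rcomb_eproj_butlast_split:
  assumes "l \<noteq> []" "eps (last l) = 0"
  shows "rcomb_eproj_butlast l
    = rcomb_eproj l + tapply (\<lambda>p. rcomb_eproj_butlast (butlast l @ p)) (\<delta> (last l))"
proof -
  let ?as = "map eproj_lin (butlast l)" and ?z = "last l"
  let ?F = "\<lambda>p. mult (e (p ! 0)) (p ! 1)"
  have additive: "additive (\<lambda>w. rcomb mult (?as @ [w]))"
    by unfold_locales (use rcomb_add[of ?as _ _ "[]"] in simp)
  have "rcomb_eproj_butlast l = rcomb mult (?as @ [e ?z + tapply ?F (\<delta> ?z)])"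
    using eproj_decomposition[OF assms(2)] by (simp add: rcomb_eproj_butlast_def)
  also have "\<dots> = rcomb mult (?as @ [e ?z]) + tapply (\<lambda>p. rcomb mult (?as @ [?F p])) (\<delta> ?z)"
    by (simp add: additive.add[OF additive] additive_tapply[OF additive])
  also have "rcomb mult (?as @ [e ?z]) = rcomb mult (map eproj_lin (butlast l @ [last l]))"
    using assms(2) by (simp add: eproj_lin_eq)
  also have "\<dots> = rcomb_eproj l"
    using append_butlast_last_id[OF assms(1)] by (simp add: rcomb_eproj_def)
  also have "tapply (\<lambda>p. rcomb mult (?as @ [?F p])) (\<delta> ?z)
      = tapply (\<lambda>p. rcomb_eproj_butlast (butlast l @ p)) (\<delta> ?z)"
  proof (rule tapply_cong[OF refl])
    fix p assume p: "p \<in> set (\<delta> ?z)"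
    then obtain a b where "p = [a, b]"
      using length_rcoprod length_eq_2E by blast
    moreover have "eps a = 0"
      using eps_rcoprod[OF p] \<open>p = [a, b]\<close> by simp
    ultimately show "rcomb mult (?as @ [?F p]) = rcomb_eproj_butlast (butlast l @ p)"
      by (simp add: rcomb_eproj_butlast_def rcomb_snoc_mult butlast_append eproj_lin_eq)
  qed
  finally show ?thesis .
qed

lemma rcomb_eproj_butlast_step:
  assumes "eps x = 0"
  shows "tapply rcomb_eproj_butlast (\<delta>pow n x)
    = tapply rcomb_eproj (\<delta>pow n x) + tapply rcomb_eproj_butlast (\<delta>pow (Suc n) x)"
proof -
  have "tapply rcomb_eproj_butlast (\<delta>pow n x) = tapply (\<lambda>l. rcomb_eproj l
      + tapply (\<lambda>p. rcomb_eproj_butlast (butlast l @ p)) (\<delta> (last l))) (\<delta>pow n x)"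
  proof (rule tapply_cong[OF refl])
    fix l assume l: "l \<in> set (\<delta>pow n x)"
    then have "l \<noteq> []"
      using length_dpow by fastforce
    with eps_dpow[OF assms l] show "rcomb_eproj_butlast l
        = rcomb_eproj l + tapply (\<lambda>p. rcomb_eproj_butlast (butlast l @ p)) (\<delta> (last l))"
      by (intro rcomb_eproj_butlast_split) auto
  qed
  also have "\<dots> = tapply rcomb_eproj (\<delta>pow n x)
      + tapply rcomb_eproj_butlast (tmap_slot n \<delta> (\<delta>pow n x))"
  proof -
    have "take n l = butlast l" "l ! n = last l" "drop (Suc n) l = []" if "l \<in> set (\<delta>pow n x)" for l
      using length_dpow[OF that] by (cases l rule: rev_cases; simp add: butlast_conv_take nth_append)+
    then show ?thesis
      unfolding tapply_add tapply_tmap_slot by (simp cong: tapply_cong)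
  qed
  also have "tapply rcomb_eproj_butlast (tmap_slot n \<delta> (\<delta>pow n x))
      = tapply rcomb_eproj_butlast (\<delta>pow (Suc n) x)"
    by (rule tapply_dpow_Suc_last[OF multilinear_rcomb_eproj_butlast])
  finally show ?thesis .
qed

lemma telescoping:
  assumes "eps x = 0"
  shows "x = (\<Sum>k<n. tapply rcomb_eproj (\<delta>pow k x)) + tapply rcomb_eproj_butlast (\<delta>pow n x)"
proof (induction n)
  case 0
  show ?case by (simp add: rcomb_eproj_butlast_def)
next
  case (Suc n)
  then show ?case
    using rcomb_eproj_butlast_step[OF assms, of n] by (simp add: add_ac)
qed

theorem eproj_expansion:
  assumes x: "eps x = 0" and N: "\<forall>n\<ge>N. teq scale (\<delta>pow n x) []"
  shows "x = e x + (\<Sum>n\<in>{1..N}. tapply (\<lambda>l. rcomb mult (map e l)) (\<delta>pow n x))"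
proof -
  have vanish: "tapply rcomb_eproj_butlast (\<delta>pow (Suc N) x) = 0"
    using N by (intro tapply_dpow_vanish[of N] multilinear_rcomb_eproj_butlast) auto
  have rcomb_eproj_dpow:
    "tapply rcomb_eproj (\<delta>pow k x) = tapply (\<lambda>l. rcomb mult (map e l)) (\<delta>pow k x)" for k
    using eps_dpow[OF x]
    by (auto simp: rcomb_eproj_def eproj_lin_eq intro!: tapply_cong arg_cong[where f = "rcomb mult"])
  have "x = (\<Sum>k<Suc N. tapply rcomb_eproj (\<delta>pow k x))"
    using telescoping[OF x, of "Suc N"] vanish by simp
  also have "\<dots> = e x + (\<Sum>k<N. tapply rcomb_eproj (\<delta>pow (Suc k) x))"
    by (simp only: sum.lessThan_Suc_shift) (simp add: rcomb_eproj_def eproj_lin_eq x)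
  also have "(\<Sum>k<N. tapply rcomb_eproj (\<delta>pow (Suc k) x))
      = (\<Sum>n\<in>{1..N}. tapply (\<lambda>l. rcomb mult (map e l)) (\<delta>pow n x))"
    by (simp only: rcomb_eproj_dpow One_nat_def sum.atLeast1_atMost_eq)
  finally show ?thesis .
qed

end

theorem lemma4p3:
  fixes scale :: "'k::field \<Rightarrow> 'a::ab_group_add \<Rightarrow> 'a"
    and mult :: "'a \<Rightarrow> 'a \<Rightarrow> 'a" and u :: 'a
    and Delta :: "'a \<Rightarrow> 'a list list" and eps :: "'a \<Rightarrow> 'k"
    and x :: 'a and N :: nat
  assumes "AsMag_bialgebra scale mult u Delta eps"
    and "connected_bialg scale u Delta eps"
    and "eps x = 0"
    and "\<forall>n\<ge>N. teq scale (dpow scale eps u Delta n x) []"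
  shows "x = eproj scale mult eps u Delta x
           + (\<Sum>n\<in>{1..N}. tapply (\<lambda>l. rcomb mult (map (eproj scale mult eps u Delta) l))
                                  (dpow scale eps u Delta n x))"
proof -
  interpret asmag_bialgebra scale mult u Delta eps
    by (rule asmag_bialgebra.intro) (fact assms(1))
  show ?thesis
  proof (cases "u = 0")
    case True
    show ?thesis
      by (rule trans[OF trivial_if_unit_zero trivial_if_unit_zero[symmetric]]) (fact True)+
  next
    case False
    interpret connected_asmag_bialgebra scale mult u Delta eps
      using assms(2) False by unfold_locales
    show ?thesis
      by (rule eproj_expansion[OF assms(3,4)])
  qed
qed

end
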